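(* Let $G$ be a nontrivial finite $p$-group of nilpotency class $c$. In the bar code of the degree-$2$ lower central persistence module of $G$, every interval $[a,b]$ with $a<b$ has $a=1$. Equivalently, for every $2\le k\le c-1$... more precisely, for every $1\le k<l\le c$ the image of $H_2(Q_k,\mathbb F_p)\to H_2(Q_l,\mathbb F_p)$ equals the image of $H_2(G,\mathbb F_p)\to H_2(Q_l,\mathbb F_p)$.
   Context: Lower central series: $L_1(G)=G$, $L_{i+1}(G)=[L_i(G),G]$, so $L_{c+1}(G)=1\ne L_c(G)$. For $k=1,\dots,c$ set $Q_k=G/L_{c+2-k}(G)$ (so $Q_1=G$, $Q_c=G/L_2(G)$). The degree-$n$ lower central persistence module of $G$ is the sequence of $\mathbb F_p$-linear maps $V_1\to V_2\to\cdots\to V_c$ with $V_k=H_n(Q_k,\mathbb F_p)$ and maps induced by the natural surjections $Q_k\to Q_{k+1}$. Such a module decomposes, uniquely up to isomorphism and order, as a direct sum of interval modules $I[a,b]$ ($1\le a\le b\le c$), where $I[a,b]$ has $\mathbb F_p$ in positions $a,\dots,b$, identity maps between consecutive positions in this range, and $0$ elsewhere. The bar code is the multiset of intervals $[a,b]$ occurring in this decomposition. *)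

theory Defs
  imports "HOL-Algebra.Coset" "HOL-Algebra.Generated_Groups" "Berlekamp_Zassenhaus.Finite_Field"
begin

text \<open>lcs G n is the (n+1)-st term L_(n+1)(G): lcs G 0 = G, lcs G (n+1) = [lcs G n, G].\<close>
primrec lcs :: "('a, 'b) monoid_scheme \<Rightarrow> nat \<Rightarrow> 'a set" where
  "lcs G 0 = carrier G"
| "lcs G (Suc n) = generate G {x \<otimes>\<^bsub>G\<^esub> y \<otimes>\<^bsub>G\<^esub> inv\<^bsub>G\<^esub> x \<otimes>\<^bsub>G\<^esub> inv\<^bsub>G\<^esub> y | x y. x \<in> lcs G n \<and> y \<in> carrier G}"

text \<open>Paper indexing: L G i = L_i(G) for i \<ge> 1.\<close>
definition L :: "('a, 'b) monoid_scheme \<Rightarrow> nat \<Rightarrow> 'a set" where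
  "L G i = lcs G (i - 1)"

definition Q :: "('a, 'b) monoid_scheme \<Rightarrow> nat \<Rightarrow> nat \<Rightarrow> 'a set monoid" where
  "Q G c k = G Mod (L G (c + 2 - k))"

text \<open>The natural surjection Q_k -> Q_l (k \<le> l) sends the coset N x to N' x = N' N x.\<close>
definition qmap :: "('a, 'b) monoid_scheme \<Rightarrow> nat \<Rightarrow> nat \<Rightarrow> 'a set \<Rightarrow> 'a set" where
  "qmap G c l S = L G (c + 2 - l) <#>\<^bsub>G\<^esub> S"

definition gmap :: "('a, 'b) monoid_scheme \<Rightarrow> nat \<Rightarrow> nat \<Rightarrow> 'a \<Rightarrow> 'a set" where
  "gmap G c l x = L G (c + 2 - l) #>\<^bsub>G\<^esub> x"

text \<open>Coefficients in the field 'p mod_ring = F_p (p = CARD('p) prime). An n-chain is a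
  function from n-tuples (lists of length n) of group elements to F_p, zero outside
  such tuples: i.e. an element of F_p[G^n] = C_n(G) (x)_{ZG} F_p of the bar resolution.\<close>

definition tuples :: "('a, 'b) monoid_scheme \<Rightarrow> nat \<Rightarrow> 'a list set" where
  "tuples H n = {xs. length xs = n \<and> set xs \<subseteq> carrier H}"

definition chains :: "('a, 'b) monoid_scheme \<Rightarrow> nat \<Rightarrow> ('a list \<Rightarrow> 'p::prime_card mod_ring) set" where
  "chains H n = {c. \<forall>xs. c xs \<noteq> 0 \<longrightarrow> xs \<in> tuples H n}"

definition face :: "('a, 'b) monoid_scheme \<Rightarrow> 'a list \<Rightarrow> nat \<Rightarrow> 'a list" where
  "face H xs i =
    (if i = 0 then tl xs
     else if i = length xs then butlast xs
     else take (i - 1) xs @ [xs ! (i - 1) \<otimes>\<^bsub>H\<^esub> xs ! i] @ drop (i + 1) xs)"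

text \<open>Boundary d_n : C_n \<rightarrow> C_(n-1), d[g1|..|gn] = \<Sum>_(i=0..n) (-1)^i face_i (trivial action).\<close>
definition bdry :: "('a, 'b) monoid_scheme \<Rightarrow> nat \<Rightarrow> ('a list \<Rightarrow> 'p::prime_card mod_ring) \<Rightarrow> ('a list \<Rightarrow> 'p mod_ring)" where
  "bdry H n c = (\<lambda>ys. \<Sum>xs\<in>tuples H n. c xs *
       (\<Sum>i\<in>{0..n}. (-1) ^ i * (if face H xs i = ys then 1 else 0)))"

definition cycles :: "('a, 'b) monoid_scheme \<Rightarrow> nat \<Rightarrow> ('a list \<Rightarrow> 'p::prime_card mod_ring) set" where
  "cycles H n = {c \<in> chains H n. bdry H n c = (\<lambda>_. 0)}"

definition boundaries :: "('a, 'b) monoid_scheme \<Rightarrow> nat \<Rightarrow> ('a list \<Rightarrow> 'p::prime_card mod_ring) set" where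
  "boundaries H n = bdry H (Suc n) ` chains H (Suc n)"

definition pushforward :: "('a, 'b) monoid_scheme \<Rightarrow> ('a \<Rightarrow> 'c) \<Rightarrow> nat \<Rightarrow> ('a list \<Rightarrow> 'p::prime_card mod_ring) \<Rightarrow> ('c list \<Rightarrow> 'p mod_ring)" where
  "pushforward H f n c = (\<lambda>ys. \<Sum>xs\<in>{xs \<in> tuples H n. map f xs = ys}. c xs)"

text \<open>Image of H_n(H;F_p) \<rightarrow> H_n(K;F_p) induced by f, represented by its full preimage
  in the cycle space Z_n(K) (i.e. f_*(Z_n(H)) + B_n(K)); two images in H_n(K) = Z_n/B_n
  coincide iff these preimages coincide.\<close>
definition hom_image :: "('a, 'b) monoid_scheme \<Rightarrow> ('c, 'd) monoid_scheme \<Rightarrow> ('a \<Rightarrow> 'c) \<Rightarrow> nat \<Rightarrow> ('c list \<Rightarrow> 'p::prime_card mod_ring) set" where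
  "hom_image H K f n = {(\<lambda>ys. z ys + b ys) | z b. z \<in> pushforward H f n ` cycles H n \<and> b \<in> boundaries K n}"

end

theory Submission
  imports Defs "HOL-Library.Function_Algebras"
begin

(*
  Let M \<subseteq> N be normal subgroups of a finite group G with M \<subseteq> [N, G].  We show that
  H_2(G/M) \<rightarrow> H_2(G/N) and H_2(G) \<rightarrow> H_2(G/N) have the same image; for a group of
  class c with M = L_(c+2-k)(G), N = L_(c+2-l)(G) and k < l this is Proposition 3.

  The image of H_2(G) is contained in the image of H_2(G/M) because G \<rightarrow> G/N factors
  through G/M.  Conversely, lift a 2-cycle z of G/M along a set-theoretic section to a
  2-chain w of G.  Its boundary d = \<partial>w is a 1-chain that vanishes in G/M.  The heart of
  the proof is that every such d is the boundary of a 2-chain v whose image in G/N is a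
  boundary: on generators, [g] - [r] with g r\<inverse> \<in> M is rewritten, using M \<subseteq> [N, G],
  as a combination of boundaries of explicit chains [a|b] - [1|1] (a or b in N) and
  [y|y\<inverse>] - [y|n] - [yn|y\<inverse>] + [1|1] (n \<in> N), all of which become boundaries in G/N.
  Then w - v is a 2-cycle of G with the same image in H_2(G/N) as z.
*)

section \<open>Chains as a vector space\<close>

definition fscale :: "'r::comm_ring_1 \<Rightarrow> ('x \<Rightarrow> 'r) \<Rightarrow> 'x \<Rightarrow> 'r" where
  "fscale r f = (\<lambda>y. r * f y)"

interpretation fun_module: Modules.module "fscale :: 'r::comm_ring_1 \<Rightarrow> ('x \<Rightarrow> 'r) \<Rightarrow> 'x \<Rightarrow> 'r"
  by unfold_locales (simp_all add: fscale_def fun_eq_iff algebra_simps)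

text \<open>The basis vector at x; for a tuple xs of group elements this is the bar chain
  [x_1|...|x_n].\<close>
definition bar :: "'x \<Rightarrow> 'x \<Rightarrow> 'r::comm_ring_1" where
  "bar x = (\<lambda>y. if x = y then 1 else 0)"

definition lin_ext :: "'x set \<Rightarrow> ('x \<Rightarrow> 'y \<Rightarrow> 'r::comm_ring_1) \<Rightarrow> ('x \<Rightarrow> 'r) \<Rightarrow> 'y \<Rightarrow> 'r" where
  "lin_ext T k c = (\<lambda>y. \<Sum>x\<in>T. c x * k x y)"

interpretation lin_ext: Modules.module_hom fscale fscale "lin_ext T k" for T k
  by unfold_locales
    (simp_all add: lin_ext_def fscale_def fun_eq_iff sum.distrib sum_distrib_left algebra_simps)

lemma sum_apply: "(\<Sum>i\<in>I. f i) x = (\<Sum>i\<in>I. f i x)"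
  by (induction I rule: infinite_finite_induct) simp_all

lemma sum_bar_mult:
  assumes "finite T" "x \<in> T"
  shows "(\<Sum>y\<in>T. bar x y * f y) = f x"
proof -
  have "(\<Sum>y\<in>T. bar x y * f y) = (\<Sum>y\<in>T. if x = y then f y else 0)"
    by (rule sum.cong) (auto simp: bar_def)
  then show ?thesis using assms by (simp add: sum.delta)
qed

lemma lin_ext_bar: "finite T \<Longrightarrow> x \<in> T \<Longrightarrow> lin_ext T k (bar x) = k x"
  by (rule ext) (simp add: lin_ext_def sum_bar_mult)

lemma lin_ext_bar_id:
  assumes "finite T" "\<And>x. c x \<noteq> 0 \<Longrightarrow> x \<in> T"
  shows "lin_ext T bar c = c"
proof (rule ext)
  fix y
  have "lin_ext T bar c y = (\<Sum>x\<in>T. if x = y then c x else 0)"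
    by (simp add: lin_ext_def bar_def if_distrib cong: if_cong)
  then show "lin_ext T bar c y = c y"
    using assms by (auto simp: sum.delta)
qed

lemma lin_ext_comp: "lin_ext T2 k2 (lin_ext T1 k1 c) = lin_ext T1 (\<lambda>x. lin_ext T2 k2 (k1 x)) c"
  by (rule ext) (simp add: lin_ext_def sum_distrib_right sum_distrib_left mult.assoc sum.swap[of _ T2])

lemma lin_ext_cong: "(\<And>x. x \<in> T \<Longrightarrow> k x = k' x) \<Longrightarrow> lin_ext T k c = lin_ext T k' c"
  by (rule ext) (simp add: lin_ext_def)

lemma lin_ext_diff_kernel: "lin_ext T (\<lambda>x. k1 x - k2 x) c = lin_ext T k1 c - lin_ext T k2 c"
  by (rule ext) (simp add: lin_ext_def sum_subtractf algebra_simps)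

lemma lin_ext_in_subspace:
  assumes "finite T" "fun_module.subspace S" "\<And>x. x \<in> T \<Longrightarrow> k x \<in> S"
  shows "lin_ext T k c \<in> S"
proof -
  have "lin_ext T k c = (\<Sum>x\<in>T. fscale (c x) (k x))"
    by (simp add: lin_ext_def fscale_def fun_eq_iff sum_apply)
  also have "\<dots> \<in> S"
    using assms(2,3) by (intro fun_module.subspace_sum fun_module.subspace_scale)
  finally show ?thesis .
qed

section \<open>The bar complex\<close>

lemma finite_tuples: "finite (carrier H) \<Longrightarrow> finite (tuples H n)"
  unfolding tuples_def by (rule rev_finite_subset[OF finite_lists_length_eq[of _ n]]) auto

lemma tuples_map: "f \<in> carrier H \<rightarrow> carrier K \<Longrightarrow> xs \<in> tuples H n \<Longrightarrow> map f xs \<in> tuples K n"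
  by (auto simp: tuples_def)

lemma chains_subspace: "fun_module.subspace (chains H n)"
proof -
  have "(a + b) xs \<noteq> 0 \<Longrightarrow> a xs \<noteq> 0 \<or> b xs \<noteq> 0" for a b :: "'a list \<Rightarrow> 'p::prime_card mod_ring" and xs
    by auto
  then show ?thesis
    unfolding fun_module.subspace_def chains_def by (auto simp: fscale_def) blast
qed

lemma bar_chains: "xs \<in> tuples H n \<Longrightarrow> bar xs \<in> chains H n"
  by (simp add: chains_def bar_def)

definition bar_bdry :: "('a, 'b) monoid_scheme \<Rightarrow> nat \<Rightarrow> 'a list \<Rightarrow> 'a list \<Rightarrow> 'r::comm_ring_1" where
  "bar_bdry H n xs = (\<lambda>ys. \<Sum>i\<in>{0..n}. (-1) ^ i * bar (face H xs i) ys)"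

lemma bar_bdry_sum: "bar_bdry H n xs = (\<Sum>i\<in>{0..n}. fscale ((-1) ^ i) (bar (face H xs i)))"
  by (simp add: bar_bdry_def fscale_def fun_eq_iff sum_apply)

lemma bdry_lin_ext: "bdry H n = lin_ext (tuples H n) (bar_bdry H n)"
  by (intro ext) (simp add: bdry_def lin_ext_def bar_bdry_def bar_def)

lemma pushforward_lin_ext:
  "finite (carrier H) \<Longrightarrow> pushforward H f n = lin_ext (tuples H n) (\<lambda>xs. bar (map f xs))"
  by (intro ext) (simp add: pushforward_def lin_ext_def bar_def sum.inter_filter finite_tuples
      if_distrib cong: if_cong)

interpretation bdry: Modules.module_hom fscale fscale "bdry H n" for H n
  unfolding bdry_lin_ext by (rule lin_ext.module_hom_axioms)

interpretation pushforward: Modules.module_hom fscale fscale "pushforward H f n" for H f n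
  by unfold_locales
    (simp_all add: pushforward_def fscale_def fun_eq_iff sum.distrib sum_distrib_left)

lemma bdry_bar: "finite (carrier H) \<Longrightarrow> xs \<in> tuples H n \<Longrightarrow> bdry H n (bar xs) = bar_bdry H n xs"
  unfolding bdry_lin_ext by (rule lin_ext_bar[OF finite_tuples])

lemma pushforward_bar:
  "finite (carrier H) \<Longrightarrow> xs \<in> tuples H n \<Longrightarrow> pushforward H f n (bar xs) = bar (map f xs)"
  by (simp add: pushforward_lin_ext lin_ext_bar finite_tuples)

lemma bar_bdry_2: "bar_bdry H 2 [a, b] = bar [b] - bar [a \<otimes>\<^bsub>H\<^esub> b] + bar [a]"
  by (rule ext) (simp add: bar_bdry_def face_def numeral_2_eq_2)

lemma bar_bdry_3:
  "bar_bdry H 3 [a, b, c] = bar [b, c] - bar [a \<otimes>\<^bsub>H\<^esub> b, c] + bar [a, b \<otimes>\<^bsub>H\<^esub> c] - bar [a, b]"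
  by (rule ext) (simp add: bar_bdry_def face_def numeral_3_eq_3)

lemma face_tuples:
  assumes "group H" "xs \<in> tuples H (Suc n)" "i \<le> Suc n"
  shows "face H xs i \<in> tuples H n"
proof -
  have len: "length xs = Suc n" and xs: "set xs \<subseteq> carrier H"
    using assms(2) by (auto simp: tuples_def)
  consider "i = 0" | "i = Suc n" | "0 < i" "i < Suc n" using assms(3) by linarith
  then show ?thesis
  proof cases
    case 1
    have "set (tl xs) \<subseteq> set xs" by (cases xs) auto
    then show ?thesis using 1 len xs by (simp add: face_def tuples_def)
  next
    case 2
    have "set (butlast xs) \<subseteq> set xs" by (meson in_set_butlastD subsetI)
    then show ?thesis using 2 len xs by (simp add: face_def tuples_def)
  next
    case 3
    have face: "face H xs i = take (i - 1) xs @ [xs ! (i - 1) \<otimes>\<^bsub>H\<^esub> xs ! i] @ drop (i + 1) xs"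
      using 3 len by (simp add: face_def)
    have "xs ! (i - 1) \<otimes>\<^bsub>H\<^esub> xs ! i \<in> carrier H"
      using 3 len xs by (intro monoid.m_closed[OF group.is_monoid[OF assms(1)]]) auto
    moreover have "set (take (i - 1) xs) \<subseteq> carrier H" "set (drop (i + 1) xs) \<subseteq> carrier H"
      by (rule order_trans[OF set_take_subset xs], rule order_trans[OF set_drop_subset xs])
    ultimately show ?thesis
      unfolding face tuples_def using 3 len by simp
  qed
qed

lemma face_map:
  assumes f: "f \<in> hom H K" and xs: "xs \<in> tuples H n" and "i \<le> n"
  shows "map f (face H xs i) = face K (map f xs) i"
proof (cases "i = 0 \<or> i = n")
  case True
  then show ?thesis using xs by (auto simp: face_def tuples_def map_tl map_butlast)
next
  case False
  then have "xs ! (i - 1) \<in> carrier H" "xs ! i \<in> carrier H"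
    using xs \<open>i \<le> n\<close> by (auto simp: tuples_def)
  then show ?thesis
    using False xs \<open>i \<le> n\<close> by (auto simp: face_def tuples_def take_map drop_map hom_mult[OF f])
qed

lemma bar_bdry_chains:
  assumes "group H" "xs \<in> tuples H (Suc n)"
  shows "bar_bdry H (Suc n) xs \<in> chains H n"
  unfolding bar_bdry_sum
  by (intro fun_module.subspace_sum[OF chains_subspace] fun_module.subspace_scale[OF chains_subspace]
      bar_chains face_tuples[OF assms]) simp

lemma bdry_chains:
  assumes "group H" "finite (carrier H)"
  shows "bdry H (Suc n) c \<in> chains H n"
  unfolding bdry_lin_ext
  by (rule lin_ext_in_subspace[OF finite_tuples[OF assms(2)] chains_subspace bar_bdry_chains[OF assms(1)]])

lemma pushforward_chains:
  assumes "finite (carrier H)" "f \<in> carrier H \<rightarrow> carrier K"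
  shows "pushforward H f n c \<in> chains K n"
  unfolding pushforward_lin_ext[OF assms(1)]
  by (rule lin_ext_in_subspace[OF finite_tuples[OF assms(1)] chains_subspace
        bar_chains[OF tuples_map[OF assms(2)]]])

lemma bdry_pushforward:
  assumes "group H" "finite (carrier H)" "finite (carrier K)" and f: "f \<in> hom H K"
  shows "bdry K (Suc n) (pushforward H f (Suc n) c) = pushforward H f n (bdry H (Suc n) c)"
proof -
  have fc: "f \<in> carrier H \<rightarrow> carrier K" using f by (simp add: hom_def)
  have faces: "bar_bdry K (Suc n) (map f xs) = pushforward H f n (bar_bdry H (Suc n) xs)"
    if xs: "xs \<in> tuples H (Suc n)" for xs
  proof -
    have "pushforward H f n (bar_bdry H (Suc n) xs)
        = (\<Sum>i\<in>{0..Suc n}. fscale ((-1) ^ i) (pushforward H f n (bar (face H xs i))))"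
      by (simp only: bar_bdry_sum pushforward.sum pushforward.scale)
    also have "\<dots> = (\<Sum>i\<in>{0..Suc n}. fscale ((-1) ^ i) (bar (face K (map f xs) i)))"
      by (intro sum.cong refl)
        (simp add: pushforward_bar[OF assms(2) face_tuples[OF assms(1) xs]] face_map[OF f xs])
    also have "\<dots> = bar_bdry K (Suc n) (map f xs)"
      by (simp only: bar_bdry_sum)
    finally show ?thesis by (rule sym)
  qed
  have "bdry K (Suc n) (pushforward H f (Suc n) c)
      = lin_ext (tuples H (Suc n)) (\<lambda>xs. bar_bdry K (Suc n) (map f xs)) c"
    unfolding bdry_lin_ext pushforward_lin_ext[OF assms(2)] lin_ext_comp
    by (intro lin_ext_cong lin_ext_bar[OF finite_tuples[OF assms(3)] tuples_map[OF fc]])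
  also have "\<dots> = lin_ext (tuples H (Suc n)) (\<lambda>xs. pushforward H f n (bar_bdry H (Suc n) xs)) c"
    by (intro lin_ext_cong faces)
  also have "\<dots> = pushforward H f n (bdry H (Suc n) c)"
    unfolding bdry_lin_ext pushforward_lin_ext[OF assms(2)] lin_ext_comp ..
  finally show ?thesis .
qed

lemma pushforward_comp:
  assumes "finite (carrier H)" "finite (carrier K)" "f \<in> carrier H \<rightarrow> carrier K"
  shows "pushforward K g n (pushforward H f n c) = pushforward H (g \<circ> f) n c"
  unfolding pushforward_lin_ext[OF assms(1)] pushforward_lin_ext[OF assms(2)] lin_ext_comp
  by (intro lin_ext_cong) (simp add: lin_ext_bar finite_tuples assms(2) tuples_map[OF assms(3)])

lemma pushforward_cong:
  assumes "\<And>x. x \<in> carrier H \<Longrightarrow> f x = g x"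
  shows "pushforward H f n c = pushforward H g n c"
proof -
  have "map f xs = map g xs" if "xs \<in> tuples H n" for xs
    using that assms by (auto simp: tuples_def intro!: map_cong)
  then have "{xs \<in> tuples H n. map f xs = ys} = {xs \<in> tuples H n. map g xs = ys}" for ys
    by auto
  then show ?thesis by (simp add: pushforward_def)
qed

lemma pushforward_id: "c \<in> chains H n \<Longrightarrow> pushforward H (\<lambda>x. x) n c = c"
proof (rule ext)
  fix ys assume c: "c \<in> chains H n"
  have "{xs \<in> tuples H n. map (\<lambda>x. x) xs = ys} = (if ys \<in> tuples H n then {ys} else {})"
    by auto
  then show "pushforward H (\<lambda>x. x) n c ys = c ys"
    using c by (auto simp: pushforward_def chains_def)
qed

lemma boundaries_subspace: "fun_module.subspace (boundaries K n)"
  unfolding boundaries_def by (rule bdry.subspace_image[OF chains_subspace])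

lemma bar_bdry_boundaries:
  "finite (carrier K) \<Longrightarrow> xs \<in> tuples K (Suc n) \<Longrightarrow> bar_bdry K (Suc n) xs \<in> boundaries K n"
  unfolding boundaries_def by (rule image_eqI[of _ _ "bar xs"]) (simp_all add: bdry_bar bar_chains)

lemma degenerate_boundaries:
  assumes "group H" "finite (carrier H)" "x \<in> carrier H"
  shows "bar [\<one>\<^bsub>H\<^esub>, \<one>\<^bsub>H\<^esub>] - bar [x, \<one>\<^bsub>H\<^esub>] \<in> boundaries H 2"
    and "bar [\<one>\<^bsub>H\<^esub>, x] - bar [\<one>\<^bsub>H\<^esub>, \<one>\<^bsub>H\<^esub>] \<in> boundaries H 2"
proof -
  have "[x, \<one>\<^bsub>H\<^esub>, \<one>\<^bsub>H\<^esub>] \<in> tuples H (Suc 2)" "[\<one>\<^bsub>H\<^esub>, \<one>\<^bsub>H\<^esub>, x] \<in> tuples H (Suc 2)"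
    using assms by (simp_all add: tuples_def group.is_monoid monoid.one_closed)
  from this[THEN bar_bdry_boundaries[OF assms(2)]]
  show "bar [\<one>\<^bsub>H\<^esub>, \<one>\<^bsub>H\<^esub>] - bar [x, \<one>\<^bsub>H\<^esub>] \<in> boundaries H 2"
    and "bar [\<one>\<^bsub>H\<^esub>, x] - bar [\<one>\<^bsub>H\<^esub>, \<one>\<^bsub>H\<^esub>] \<in> boundaries H 2"
    using assms by (simp_all add: bar_bdry_3 group.is_monoid monoid.r_one monoid.l_one
        monoid.one_closed)
qed

lemma pushforward_cycles:
  assumes "group H" "finite (carrier H)" "finite (carrier K)" "f \<in> hom H K"
    and z: "z \<in> cycles H (Suc n)"
  shows "pushforward H f (Suc n) z \<in> cycles K (Suc n)"
proof -
  have fc: "f \<in> carrier H \<rightarrow> carrier K" using assms(4) by (simp add: hom_def)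
  have "bdry H (Suc n) z = 0" using z by (simp add: cycles_def zero_fun_def)
  then have "bdry K (Suc n) (pushforward H f (Suc n) z) = 0"
    by (simp add: bdry_pushforward[OF assms(1-4)])
  then show ?thesis
    using pushforward_chains[OF assms(2) fc] by (simp add: cycles_def zero_fun_def)
qed

lemma hom_image_factor:
  assumes "group H" "finite (carrier H)" "finite (carrier H')" "f \<in> hom H H'"
    and h: "\<And>x. x \<in> carrier H \<Longrightarrow> h x = g (f x)"
  shows "hom_image H K h (Suc n) \<subseteq> hom_image H' K g (Suc n)"
proof
  fix x assume "x \<in> hom_image H K h (Suc n)"
  then obtain z b where x: "x = (\<lambda>ys. pushforward H h (Suc n) z ys + b ys)"
    and z: "z \<in> cycles H (Suc n)" and b: "b \<in> boundaries K (Suc n)"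
    unfolding hom_image_def by blast
  have fc: "f \<in> carrier H \<rightarrow> carrier H'" using assms(4) by (simp add: hom_def)
  have "pushforward H h (Suc n) z = pushforward H (g \<circ> f) (Suc n) z"
    by (rule pushforward_cong) (simp add: h)
  also have "\<dots> = pushforward H' g (Suc n) (pushforward H f (Suc n) z)"
    by (rule pushforward_comp[symmetric, OF assms(2,3) fc])
  finally have "pushforward H h (Suc n) z = pushforward H' g (Suc n) (pushforward H f (Suc n) z)" .
  moreover have "pushforward H f (Suc n) z \<in> cycles H' (Suc n)"
    by (rule pushforward_cycles[OF assms(1-4) z])
  ultimately show "x \<in> hom_image H' K g (Suc n)"
    unfolding hom_image_def x using b by blast
qed

section \<open>The lower central series\<close>

lemma (in group) conj_commutator:
  assumes "x \<in> carrier G" "y \<in> carrier G" "g \<in> carrier G"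
  shows "g \<otimes> (x \<otimes> y \<otimes> inv x \<otimes> inv y) \<otimes> inv g
       = (g \<otimes> x \<otimes> inv g) \<otimes> (g \<otimes> y \<otimes> inv g) \<otimes> inv (g \<otimes> x \<otimes> inv g) \<otimes> inv (g \<otimes> y \<otimes> inv g)"
proof -
  have cancel: "inv g \<otimes> (g \<otimes> z) = z" if "z \<in> carrier G" for z
    using assms(3) that by (simp add: m_assoc[symmetric])
  show ?thesis using assms by (simp add: inv_mult_group m_assoc cancel)
qed

lemma (in normal) commutator_closed:
  assumes "x \<in> H" "y \<in> carrier G"
  shows "x \<otimes>\<^bsub>G\<^esub> y \<otimes>\<^bsub>G\<^esub> inv\<^bsub>G\<^esub> x \<otimes>\<^bsub>G\<^esub> inv\<^bsub>G\<^esub> y \<in> H"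
proof -
  have "y \<otimes>\<^bsub>G\<^esub> inv\<^bsub>G\<^esub> x \<otimes>\<^bsub>G\<^esub> inv\<^bsub>G\<^esub> y \<in> H"
    using inv_op_closed2[OF assms(2), of "inv\<^bsub>G\<^esub> x"] assms(1) by simp
  then have "x \<otimes>\<^bsub>G\<^esub> (y \<otimes>\<^bsub>G\<^esub> inv\<^bsub>G\<^esub> x \<otimes>\<^bsub>G\<^esub> inv\<^bsub>G\<^esub> y) \<in> H"
    using assms(1) by (simp add: m_closed)
  then show ?thesis using assms subset by (simp add: m_assoc)
qed

lemma (in normal) commutator_subgroup_le:
  "generate G {x \<otimes>\<^bsub>G\<^esub> y \<otimes>\<^bsub>G\<^esub> inv\<^bsub>G\<^esub> x \<otimes>\<^bsub>G\<^esub> inv\<^bsub>G\<^esub> y | x y. x \<in> H \<and> y \<in> carrier G} \<subseteq> H"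
  by (rule group.generate_subgroup_incl[OF is_group _ subgroup_axioms]) (auto intro: commutator_closed)

lemma lcs_normal:
  assumes "group G"
  shows "lcs G n \<lhd> G"
proof (induction n)
  case 0
  then show ?case using group.normal_self[OF assms] by simp
next
  case (Suc n)
  interpret group G by fact
  let ?X = "{x \<otimes>\<^bsub>G\<^esub> y \<otimes>\<^bsub>G\<^esub> inv\<^bsub>G\<^esub> x \<otimes>\<^bsub>G\<^esub> inv\<^bsub>G\<^esub> y | x y. x \<in> lcs G n \<and> y \<in> carrier G}"
  have sub: "lcs G n \<subseteq> carrier G" using Suc normal_imp_subgroup subgroup.subset by blast
  have "generate G ?X \<lhd> G"
  proof (rule normal_generateI)
    show "?X \<subseteq> carrier G" using sub by auto
  next
    fix h g assume "h \<in> ?X" and g: "g \<in> carrier G"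
    then obtain x y where h: "h = x \<otimes>\<^bsub>G\<^esub> y \<otimes>\<^bsub>G\<^esub> inv\<^bsub>G\<^esub> x \<otimes>\<^bsub>G\<^esub> inv\<^bsub>G\<^esub> y"
      and x: "x \<in> lcs G n" and y: "y \<in> carrier G" by blast
    have "g \<otimes>\<^bsub>G\<^esub> x \<otimes>\<^bsub>G\<^esub> inv\<^bsub>G\<^esub> g \<in> lcs G n" using normal_invE(2)[OF Suc.IH g x] .
    then show "g \<otimes>\<^bsub>G\<^esub> h \<otimes>\<^bsub>G\<^esub> inv\<^bsub>G\<^esub> g \<in> ?X"
      unfolding h conj_commutator[OF subsetD[OF sub x] y g] using g y by blast
  qed
  then show ?case by simp
qed

lemma lcs_antimono:
  assumes "group G" "i \<le> j"
  shows "lcs G j \<subseteq> lcs G i"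
proof -
  have "lcs G (Suc n) \<subseteq> lcs G n" for n
    using normal.commutator_subgroup_le[OF lcs_normal[OF assms(1)]] by simp
  then show ?thesis by (rule lift_Suc_antimono_le[of "lcs G"]) (rule assms(2))
qed

section \<open>Relative boundaries for normal subgroups M \<subseteq> [N, G]\<close>

locale commutator_pair =
  fixes G :: "('a, 'b) monoid_scheme" (structure) and M N :: "'a set"
    and coefficients :: "'p::prime_card itself"
  assumes group_G: "group G" and finite_G: "finite (carrier G)"
    and normal_M: "M \<lhd> G" and normal_N: "N \<lhd> G"
    and M_le_commutators: "M \<subseteq> generate G {x \<otimes> y \<otimes> inv x \<otimes> inv y | x y. x \<in> N \<and> y \<in> carrier G}"
begin

sublocale group G by (rule group_G)
sublocale M: normal M G by (rule normal_M)
sublocale N: normal N G by (rule normal_N)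

definition qM :: "'a \<Rightarrow> 'a set" where "qM x = M #> x"
definition qN :: "'a \<Rightarrow> 'a set" where "qN x = N #> x"
definition qMN :: "'a set \<Rightarrow> 'a set" where "qMN X = N <#> X"
definition lift :: "'a set \<Rightarrow> 'a" where "lift X = (SOME x. x \<in> carrier G \<and> qM x = X)"

lemma finite_Mod: "finite (carrier (G Mod H))"
  by (simp add: FactGroup_def RCOSETS_def finite_G)

lemma qM_hom: "qM \<in> hom G (G Mod M)"
  using M.r_coset_hom_Mod by (simp add: qM_def[abs_def])

lemma qN_hom: "qN \<in> hom G (G Mod N)"
  using N.r_coset_hom_Mod by (simp add: qN_def[abs_def])

lemma qN_carrier: "x \<in> carrier G \<Longrightarrow> qN x \<in> carrier (G Mod N)"
  by (rule hom_in_carrier[OF qN_hom])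

lemma qN_trivial: "n \<in> N \<Longrightarrow> qN n = \<one>\<^bsub>G Mod N\<^esub>"
  unfolding qN_def FactGroup_def by (simp add: coset_join2 N.subset N.subgroup_axioms subsetD)

lemma M_le_N: "M \<subseteq> N"
  using M_le_commutators N.commutator_subgroup_le by blast

lemma N_mult_M: "N <#> M = N"
proof
  show "N <#> M \<subseteq> N" using M_le_N by (auto simp: set_mult_def intro: N.m_closed)
  show "N \<subseteq> N <#> M"
  proof
    fix n assume "n \<in> N"
    then have "n = n \<otimes> \<one>" using N.subset by auto
    then show "n \<in> N <#> M" using \<open>n \<in> N\<close> M.one_closed unfolding set_mult_def by blast
  qed
qed

lemma qMN_qM: "x \<in> carrier G \<Longrightarrow> qMN (qM x) = qN x"
  unfolding qMN_def qM_def qN_def by (simp add: setmult_rcos_assoc[OF N.subset M.subset] N_mult_M)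

lemma lift_section: assumes "X \<in> carrier (G Mod M)" shows "lift X \<in> carrier G" "qM (lift X) = X"
proof -
  have "\<exists>x. x \<in> carrier G \<and> qM x = X"
    using assms by (auto simp: FactGroup_def RCOSETS_def qM_def)
  then have "lift X \<in> carrier G \<and> qM (lift X) = X" unfolding lift_def by (rule someI_ex)
  then show "lift X \<in> carrier G" "qM (lift X) = X" by auto
qed

abbreviation BQ :: "('a set list \<Rightarrow> 'p mod_ring) set" where
  "BQ \<equiv> boundaries (G Mod N) 2"

definition Z_rel :: "('a list \<Rightarrow> 'p mod_ring) set" where
  "Z_rel = {u \<in> chains G 2. pushforward G qN 2 u \<in> BQ}"

definition B_rel :: "('a list \<Rightarrow> 'p mod_ring) set" where
  "B_rel = bdry G 2 ` Z_rel"

lemma Z_rel_subspace: "fun_module.subspace Z_rel"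
proof -
  have "Z_rel = chains G 2 \<inter> {u. pushforward G qN 2 u \<in> BQ}" by (auto simp: Z_rel_def)
  then show ?thesis
    by (simp add: fun_module.subspace_inter chains_subspace boundaries_subspace
        pushforward.subspace_linear_preimage)
qed

lemma B_rel_subspace: "fun_module.subspace B_rel"
  unfolding B_rel_def by (rule bdry.subspace_image[OF Z_rel_subspace])

lemma bar2_tuples: "a \<in> carrier G \<Longrightarrow> b \<in> carrier G \<Longrightarrow> [a, b] \<in> tuples G 2"
  by (simp add: tuples_def)

lemma bdry_bar2: "a \<in> carrier G \<Longrightarrow> b \<in> carrier G \<Longrightarrow> bdry G 2 (bar [a, b]) = bar [b] - bar [a \<otimes> b] + bar [a]"
  by (simp add: bdry_bar[OF finite_G bar2_tuples] bar_bdry_2)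

lemma pushforward_bar2: "a \<in> carrier G \<Longrightarrow> b \<in> carrier G \<Longrightarrow> pushforward G qN 2 (bar [a, b]) = bar [qN a, qN b]"
  by (simp add: pushforward_bar[OF finite_G bar2_tuples])

lemma Z_rel_bar_N:
  assumes a: "a \<in> carrier G" and b: "b \<in> carrier G" and "a \<in> N \<or> b \<in> N"
  shows "bar [a, b] - bar [\<one>, \<one>] \<in> Z_rel"
proof -
  interpret Q: group "G Mod N" by (rule N.factorgroup_is_group)
  have "bar [qN a, qN b] - bar [\<one>\<^bsub>G Mod N\<^esub>, \<one>\<^bsub>G Mod N\<^esub>] \<in> BQ"
    using \<open>a \<in> N \<or> b \<in> N\<close>
  proof
    assume "a \<in> N"
    then show ?thesis
      using degenerate_boundaries(2)[OF Q.is_group finite_Mod qN_carrier[OF b]] by (simp add: qN_trivial)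
  next
    assume "b \<in> N"
    have "- (bar [\<one>\<^bsub>G Mod N\<^esub>, \<one>\<^bsub>G Mod N\<^esub>] - bar [qN a, \<one>\<^bsub>G Mod N\<^esub>]) \<in> BQ"
      by (rule fun_module.subspace_neg[OF boundaries_subspace
            degenerate_boundaries(1)[OF Q.is_group finite_Mod qN_carrier[OF a]]])
    then show ?thesis using \<open>b \<in> N\<close> by (simp add: qN_trivial)
  qed
  moreover have "pushforward G qN 2 (bar [a, b] - bar [\<one>, \<one>] :: 'a list \<Rightarrow> 'p mod_ring)
      = bar [qN a, qN b] - bar [\<one>\<^bsub>G Mod N\<^esub>, \<one>\<^bsub>G Mod N\<^esub>]"
    using a b by (simp add: pushforward.diff pushforward_bar2 qN_trivial)
  moreover have "bar [a, b] - bar [\<one>, \<one>] \<in> chains G 2"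
    using a b by (intro fun_module.subspace_diff[OF chains_subspace] bar_chains bar2_tuples) auto
  ultimately show ?thesis by (simp add: Z_rel_def)
qed

lemma Z_rel_conj:
  assumes y: "y \<in> carrier G" and n: "n \<in> N"
  shows "bar [y, inv y] - bar [y, n] - bar [y \<otimes> n, inv y] + bar [\<one>, \<one>] \<in> Z_rel"
proof -
  interpret Q: group "G Mod N" by (rule N.factorgroup_is_group)
  have nc: "n \<in> carrier G" using n N.subset by auto
  have "qN (y \<otimes> n) = qN y \<otimes>\<^bsub>G Mod N\<^esub> \<one>\<^bsub>G Mod N\<^esub>"
    by (simp only: hom_mult[OF qN_hom y nc] qN_trivial[OF n])
  also have "\<dots> = qN y" by (rule Q.r_one[OF qN_carrier[OF y]])
  finally have "qN (y \<otimes> n) = qN y" .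
  then have "pushforward G qN 2 (bar [y, inv y] - bar [y, n] - bar [y \<otimes> n, inv y] + bar [\<one>, \<one>]
      :: 'a list \<Rightarrow> 'p mod_ring)
      = bar [\<one>\<^bsub>G Mod N\<^esub>, \<one>\<^bsub>G Mod N\<^esub>] - bar [qN y, \<one>\<^bsub>G Mod N\<^esub>]"
    using y nc by (simp add: pushforward.diff pushforward.add pushforward_bar2 qN_trivial n)
  moreover have "bar [\<one>\<^bsub>G Mod N\<^esub>, \<one>\<^bsub>G Mod N\<^esub>] - bar [qN y, \<one>\<^bsub>G Mod N\<^esub>] \<in> BQ"
    by (rule degenerate_boundaries(1)[OF Q.is_group finite_Mod qN_carrier[OF y]])
  moreover have "bar [y, inv y] - bar [y, n] - bar [y \<otimes> n, inv y] + bar [\<one>, \<one>] \<in> chains G 2"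
    using y nc
    by (intro fun_module.subspace_add[OF chains_subspace] fun_module.subspace_diff[OF chains_subspace]
        bar_chains bar2_tuples) auto
  ultimately show ?thesis by (simp add: Z_rel_def)
qed

definition rbar :: "'a \<Rightarrow> 'a list \<Rightarrow> 'p mod_ring" where
  "rbar g = bar [g] - bar [\<one>]"

lemma rbar_one: "rbar \<one> = 0"
  by (simp add: rbar_def)

lemma B_rel_additive:
  assumes "a \<in> carrier G" "b \<in> carrier G" "a \<in> N \<or> b \<in> N"
  shows "rbar (a \<otimes> b) - rbar a - rbar b \<in> B_rel"
proof -
  have "bdry G 2 (bar [a, b] - bar [\<one>, \<one>]) \<in> B_rel"
    using Z_rel_bar_N[OF assms] by (simp add: B_rel_def)
  moreover have "rbar (a \<otimes> b) - rbar a - rbar b = - bdry G 2 (bar [a, b] - bar [\<one>, \<one>])"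
    using assms(1,2) by (simp add: bdry.diff bdry_bar2 rbar_def)
  ultimately show ?thesis using fun_module.subspace_neg[OF B_rel_subspace] by simp
qed

lemma B_rel_conj:
  assumes y: "y \<in> carrier G" and n: "n \<in> N"
  shows "rbar (y \<otimes> n \<otimes> inv y) - rbar n \<in> B_rel"
proof -
  have nc: "n \<in> carrier G" using n N.subset by auto
  have "bdry G 2 (bar [y, inv y] - bar [y, n] - bar [y \<otimes> n, inv y] + bar [\<one>, \<one>]) \<in> B_rel"
    using Z_rel_conj[OF y n] by (simp add: B_rel_def)
  moreover have "bdry G 2 (bar [y, inv y] - bar [y, n] - bar [y \<otimes> n, inv y] + bar [\<one>, \<one>])
      = rbar (y \<otimes> n \<otimes> inv y) - rbar n"
    using y nc by (simp add: bdry.diff bdry.add bdry_bar2 rbar_def)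
  ultimately show ?thesis by simp
qed

lemma rbar_inv:
  assumes "n \<in> N"
  shows "rbar (inv n) + rbar n \<in> B_rel"
proof -
  have nc: "n \<in> carrier G" using assms N.subset by auto
  have "rbar (inv n \<otimes> n) - rbar (inv n) - rbar n \<in> B_rel"
    using nc assms by (intro B_rel_additive) auto
  then have "- (rbar (inv n) + rbar n) \<in> B_rel" using nc by (simp add: rbar_one)
  from fun_module.subspace_neg[OF B_rel_subspace this] show ?thesis by (simp add: add.commute)
qed

definition vanishing :: "'a set" where
  "vanishing = {g \<in> carrier G. rbar g \<in> B_rel}"

lemma commutator_vanishing:
  assumes x: "x \<in> N" and y: "y \<in> carrier G"
  shows "x \<otimes> y \<otimes> inv x \<otimes> inv y \<in> vanishing"
proof -
  have xc: "x \<in> carrier G" using x N.subset by auto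
  define t where "t = y \<otimes> inv x \<otimes> inv y"
  have t: "t \<in> N" unfolding t_def using N.inv_op_closed2[OF y, of "inv x"] x by simp
  have tc: "t \<in> carrier G" using t N.subset by auto
  have xt: "x \<otimes> y \<otimes> inv x \<otimes> inv y = x \<otimes> t" unfolding t_def using xc y by (simp add: m_assoc)
  have "rbar (x \<otimes> t) = (rbar (x \<otimes> t) - rbar x - rbar t) + (rbar t - rbar (inv x)) + (rbar (inv x) + rbar x)"
    by simp
  also have "\<dots> \<in> B_rel"
    using x xc y t tc
    by (intro fun_module.subspace_add[OF B_rel_subspace] B_rel_additive rbar_inv)
      (auto simp: t_def intro: B_rel_conj)
  finally show ?thesis using xt xc tc by (simp add: vanishing_def)
qed

lemma M_vanishing: "M \<subseteq> vanishing"
proof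
  fix h assume "h \<in> M"
  then have "h \<in> generate G {x \<otimes> y \<otimes> inv x \<otimes> inv y | x y. x \<in> N \<and> y \<in> carrier G}"
    using M_le_commutators by blast
  then show "h \<in> vanishing"
  proof (induction h rule: generate.induct)
    case one
    then show ?case
      by (simp add: vanishing_def rbar_one fun_module.subspace_0[OF B_rel_subspace])
  next
    case (incl h)
    then show ?case using commutator_vanishing by blast
  next
    case (inv h)
    then have hN: "h \<in> N" and hv: "h \<in> vanishing"
      using N.commutator_closed commutator_vanishing by blast+
    then have hc: "h \<in> carrier G" by (simp add: vanishing_def)
    have "rbar (inv h) = (rbar (inv h) + rbar h) - rbar h" by simp
    also have "\<dots> \<in> B_rel"
      using hv by (intro fun_module.subspace_diff[OF B_rel_subspace] rbar_inv[OF hN])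
        (simp add: vanishing_def)
    finally show ?case using hc by (simp add: vanishing_def)
  next
    case (eng h1 h2)
    have h2N: "h2 \<in> N" using eng.hyps(2) N.commutator_subgroup_le by blast
    have h1c: "h1 \<in> carrier G" and h2c: "h2 \<in> carrier G"
      using eng.IH by (simp_all add: vanishing_def)
    have "rbar (h1 \<otimes> h2) = (rbar (h1 \<otimes> h2) - rbar h1 - rbar h2) + rbar h1 + rbar h2" by simp
    also have "\<dots> \<in> B_rel"
      using eng.IH h1c h2c h2N
      by (intro fun_module.subspace_add[OF B_rel_subspace] B_rel_additive) (auto simp: vanishing_def)
    finally show ?case using h1c h2c by (simp add: vanishing_def)
  qed
qed

lemma B_rel_same_coset:
  assumes g: "g \<in> carrier G" and r: "r \<in> carrier G" and "qM g = qM r"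
  shows "bar [g] - bar [r] \<in> B_rel"
proof -
  have "g \<in> M #> r" using rcos_self[OF g M.subgroup_axioms] assms(3) by (simp add: qM_def)
  then have m: "g \<otimes> inv r \<in> M" by (rule M.rcos_module_imp[OF group_G r])
  define m where "m = g \<otimes> inv r"
  have mc: "m \<in> carrier G" and mN: "m \<in> N" and mv: "m \<in> vanishing"
    using m M_le_N M_vanishing M.subset by (auto simp: m_def)
  have g_eq: "g = m \<otimes> r" unfolding m_def using g r by (simp add: m_assoc)
  have "bar [g] - bar [r] = (rbar (m \<otimes> r) - rbar m - rbar r) + rbar m"
    by (simp add: g_eq rbar_def)
  also have "\<dots> \<in> B_rel"
    using mc mN mv r
    by (intro fun_module.subspace_add[OF B_rel_subspace] B_rel_additive) (auto simp: vanishing_def)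
  finally show ?thesis .
qed

lemma B_rel_kernel:
  assumes d: "d \<in> chains G 1" and qM_d: "pushforward G qM 1 d = 0"
  shows "d \<in> B_rel"
proof -
  have qM_c: "qM \<in> carrier G \<rightarrow> carrier (G Mod M)" using qM_hom by (simp add: hom_def)
  have "pushforward G (lift \<circ> qM) 1 d = pushforward (G Mod M) lift 1 (pushforward G qM 1 d)"
    by (rule pushforward_comp[symmetric, OF finite_G finite_Mod qM_c])
  also have "\<dots> = 0" by (simp only: qM_d pushforward.zero)
  finally have lifted: "lin_ext (tuples G 1) (\<lambda>xs. bar (map (lift \<circ> qM) xs)) d = 0"
    by (simp only: pushforward_lin_ext[OF finite_G])
  have "lin_ext (tuples G 1) bar d = d"
    by (rule lin_ext_bar_id[OF finite_tuples[OF finite_G]]) (use d in \<open>simp add: chains_def\<close>)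
  then have "d = lin_ext (tuples G 1) bar d - lin_ext (tuples G 1) (\<lambda>xs. bar (map (lift \<circ> qM) xs)) d"
    using lifted by simp
  also have "\<dots> = lin_ext (tuples G 1) (\<lambda>xs. bar xs - bar (map (lift \<circ> qM) xs)) d"
    by (rule lin_ext_diff_kernel[symmetric])
  also have "\<dots> \<in> B_rel"
  proof (rule lin_ext_in_subspace[OF finite_tuples[OF finite_G] B_rel_subspace])
    fix xs assume "xs \<in> tuples G 1"
    then obtain g where xs: "xs = [g]" and g: "g \<in> carrier G"
      by (auto simp: tuples_def length_Suc_conv)
    have "lift (qM g) \<in> carrier G" "qM (lift (qM g)) = qM g"
      using lift_section hom_in_carrier[OF qM_hom g] by auto
    then show "bar xs - bar (map (lift \<circ> qM) xs) \<in> B_rel"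
      using B_rel_same_coset[OF g] xs by simp
  qed
  finally show ?thesis .
qed

lemma lift_chain:
  fixes z :: "'a set list \<Rightarrow> 'p mod_ring"
  assumes z: "z \<in> chains (G Mod M) n"
  defines "w \<equiv> pushforward (G Mod M) lift n z"
  shows "w \<in> chains G n"
    and "pushforward G qM n w = z"
    and "pushforward G qN n w = pushforward (G Mod M) qMN n z"
proof -
  have lift_c: "lift \<in> carrier (G Mod M) \<rightarrow> carrier G" using lift_section by auto
  show "w \<in> chains G n" unfolding w_def by (rule pushforward_chains[OF finite_Mod lift_c])
  have "pushforward G qM n w = pushforward (G Mod M) (qM \<circ> lift) n z"
    unfolding w_def by (rule pushforward_comp[OF finite_Mod finite_G lift_c])
  also have "\<dots> = pushforward (G Mod M) (\<lambda>X. X) n z"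
    by (rule pushforward_cong) (simp add: lift_section)
  finally show "pushforward G qM n w = z" using pushforward_id[OF z] by simp
  have "pushforward G qN n w = pushforward (G Mod M) (qN \<circ> lift) n z"
    unfolding w_def by (rule pushforward_comp[OF finite_Mod finite_G lift_c])
  also have "\<dots> = pushforward (G Mod M) qMN n z"
    by (rule pushforward_cong) (simp add: lift_section qMN_qM[symmetric])
  finally show "pushforward G qN n w = pushforward (G Mod M) qMN n z" .
qed

lemma correct_to_cycle:
  assumes w: "w \<in> chains G 2" and qM_w: "pushforward G qM 2 w \<in> cycles (G Mod M) 2"
  obtains v where "v \<in> Z_rel" and "w - v \<in> cycles G 2"
proof -
  have "pushforward G qM 1 (bdry G 2 w) = bdry (G Mod M) 2 (pushforward G qM 2 w)"
    using bdry_pushforward[OF group_G finite_G finite_Mod qM_hom, of 1 w] by (simp add: numeral_2_eq_2)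
  then have "pushforward G qM 1 (bdry G 2 w) = 0"
    using qM_w by (simp add: cycles_def zero_fun_def)
  then have "bdry G 2 w \<in> B_rel"
    by (intro B_rel_kernel) (use bdry_chains[OF group_G finite_G, of 1 w] in \<open>simp add: numeral_2_eq_2\<close>)
  then obtain v where v: "v \<in> Z_rel" and bdry_v: "bdry G 2 v = bdry G 2 w"
    by (auto simp: B_rel_def)
  have "w - v \<in> cycles G 2"
    using fun_module.subspace_diff[OF chains_subspace w] v bdry_v
    by (simp add: cycles_def Z_rel_def bdry.diff zero_fun_def[symmetric])
  with v show ?thesis by (rule that)
qed

lemma hom_image_lift:
  "(hom_image (G Mod M) (G Mod N) qMN 2 :: ('a set list \<Rightarrow> 'p mod_ring) set) \<subseteq> hom_image G (G Mod N) qN 2"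
proof
  fix x :: "'a set list \<Rightarrow> 'p mod_ring"
  assume "x \<in> hom_image (G Mod M) (G Mod N) qMN 2"
  then obtain z b where x: "x = (\<lambda>ys. pushforward (G Mod M) qMN 2 z ys + b ys)"
    and z: "z \<in> cycles (G Mod M) 2" and b: "b \<in> BQ"
    unfolding hom_image_def by blast
  define w where "w = pushforward (G Mod M) lift 2 z"
  have zc: "z \<in> chains (G Mod M) 2" using z by (simp add: cycles_def)
  note w = lift_chain[OF zc, folded w_def]
  obtain v where v: "v \<in> Z_rel" and cycle: "w - v \<in> cycles G 2"
    using correct_to_cycle[OF w(1)] w(2) z by auto
  have "pushforward G qN 2 v + b \<in> BQ"
    using v b by (intro fun_module.subspace_add[OF boundaries_subspace]) (simp_all add: Z_rel_def)
  moreover have "x = (\<lambda>ys. pushforward G qN 2 (w - v) ys + (pushforward G qN 2 v + b) ys)"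
    by (simp add: x w(3) pushforward.diff fun_eq_iff)
  ultimately show "x \<in> hom_image G (G Mod N) qN 2"
    using cycle unfolding hom_image_def by blast
qed

lemma hom_image_eq:
  "(hom_image (G Mod M) (G Mod N) qMN 2 :: ('a set list \<Rightarrow> 'p mod_ring) set) = hom_image G (G Mod N) qN 2"
proof
  have "(hom_image G (G Mod N) qN (Suc 1) :: ('a set list \<Rightarrow> 'p mod_ring) set)
      \<subseteq> hom_image (G Mod M) (G Mod N) qMN (Suc 1)"
    by (rule hom_image_factor[OF group_G finite_G finite_Mod qM_hom]) (simp add: qMN_qM)
  then show "hom_image G (G Mod N) qN 2 \<subseteq> (hom_image (G Mod M) (G Mod N) qMN 2 :: ('a set list \<Rightarrow> 'p mod_ring) set)"
    by (simp add: numeral_2_eq_2)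
qed (rule hom_image_lift)

end

text \<open>For k < l the subgroup M = L_(c+2-k)(G) lies in [N, G] for N = L_(c+2-l)(G), so
  Q_k = G/M and Q_l = G/N come from a commutator pair.\<close>
theorem proposition3:
  fixes G :: "('a, 'b) monoid_scheme" and c :: nat
  assumes "group G"
    and "finite (carrier G)"
    and "\<exists>m\<ge>1. card (carrier G) = CARD('p::prime_card) ^ m"
    and "L G (c + 1) = {\<one>\<^bsub>G\<^esub>}"
    and "L G c \<noteq> {\<one>\<^bsub>G\<^esub>}"
  shows "\<forall>k l. 1 \<le> k \<and> k < l \<and> l \<le> c \<longrightarrow>
           (hom_image (Q G c k) (Q G c l) (qmap G c l) 2 :: ('a set list \<Rightarrow> 'p mod_ring) set)
             = hom_image G (Q G c l) (gmap G c l) 2"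
proof (intro allI impI)
  fix k l assume kl: "1 \<le> k \<and> k < l \<and> l \<le> c"
  define M where "M = L G (c + 2 - k)"
  define N where "N = L G (c + 2 - l)"
  have M: "M = lcs G (c + 1 - k)" and N: "N = lcs G (c + 1 - l)"
    unfolding M_def N_def L_def by (simp_all add: numeral_2_eq_2)
  have "M \<subseteq> lcs G (Suc (c + 1 - l))"
    unfolding M by (rule lcs_antimono[OF assms(1)]) (use kl in arith)
  then have "commutator_pair G M N"
    using assms(1,2) by (intro commutator_pair.intro) (simp_all add: M N lcs_normal)
  then interpret commutator_pair G M N "TYPE('p)" .
  have "L G (c + 2 - l) = N" by (simp only: N_def)
  then have "qmap G c l = qMN" "gmap G c l = qN"
    by (simp_all add: fun_eq_iff qmap_def qMN_def gmap_def qN_def)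
  then show "(hom_image (Q G c k) (Q G c l) (qmap G c l) 2 :: ('a set list \<Rightarrow> 'p mod_ring) set)
             = hom_image G (Q G c l) (gmap G c l) 2"
    using hom_image_eq by (simp add: Q_def M_def N_def)
qed

end
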